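(* Let $X$ be a finished continuum which is irreducible about $n$ points but about no fewer than $n$ points, and let $\mathcal D(X)$ be its Vought decomposition. Then every $T$-closed set $A \subset X$ is a union of elements of $\mathcal D(X)$; that is, $A = \bigcup_{x \in A} D(x)$, where $D(x)$ denotes the element of $\mathcal D(X)$ containing $x$.
   Context: A continuum is a non-empty compact connected metric space. A continuum $X$ is irreducible about a set $A\subset X$ if no proper subcontinuum of $X$ contains $A$; $X$ is finitely irreducible if it is irreducible about some finite subset, and irreducible if it is irreducible about some two-point subset. A continuum is decomposable if it is the union of two proper subcontinua, and indecomposable otherwise. A finished continuum is a finitely irreducible continuum none of whose indecomposable subcontinua has non-empty interior relative to it. For a continuum $X$ and a non-empty set $A\subset X$, $T(A)$ is the set of $x\in X$ such that every subcontinuum of $X\setminus A$ containing $x$ has empty interior relative to $X$; $A$ is $T$-closed if $T(A)=A$. Note $A\subset T(A)$ and $A\subset B$ implies $T(A)\subset T(B)$. If $X$ is a finished continuum irreducible about $n$ points but no fewer, its Vought decomposition is $\mathcal D(X)=\{T^n(\{x\}) : x\in X\}$, where $T^n$ is the $n$-fold composition of $T$. (By a theorem of Vought, $\mathcal D(X)$ is an upper semicontinuous partition of $X$ into continua with empty interior in $X$, and the quotient $X/\mathcal D(X)$ is a finite tree with $n$ endpoints.) *)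

theory Defs
  imports "HOL-Analysis.Analysis"
begin

definition continuum :: "'a::metric_space set \<Rightarrow> bool" where
  "continuum K \<longleftrightarrow> K \<noteq> {} \<and> compact K \<and> connected K"

definition irreducible_about :: "'a::metric_space set \<Rightarrow> 'a set \<Rightarrow> bool" where
  "irreducible_about X A \<longleftrightarrow> A \<subseteq> X \<and>
     (\<forall>K. continuum K \<and> K \<subseteq> X \<and> A \<subseteq> K \<longrightarrow> K = X)"

definition finitely_irreducible :: "'a::metric_space set \<Rightarrow> bool" where
  "finitely_irreducible X \<longleftrightarrow> (\<exists>A. finite A \<and> irreducible_about X A)"

definition decomposable :: "'a::metric_space set \<Rightarrow> bool" where
  "decomposable K \<longleftrightarrow> (\<exists>A B. continuum A \<and> continuum B \<and> A \<subset> K \<and> B \<subset> K \<and> A \<union> B = K)"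

definition indecomposable :: "'a::metric_space set \<Rightarrow> bool" where
  "indecomposable K \<longleftrightarrow> continuum K \<and> \<not> decomposable K"

definition rel_int :: "'a::metric_space set \<Rightarrow> 'a set \<Rightarrow> 'a set" where
  "rel_int X K = (top_of_set X) interior_of K"

definition finished :: "'a::metric_space set \<Rightarrow> bool" where
  "finished X \<longleftrightarrow> continuum X \<and> finitely_irreducible X \<and>
     (\<forall>K. K \<subseteq> X \<and> indecomposable K \<longrightarrow> rel_int X K = {})"

definition irreducible_number :: "'a::metric_space set \<Rightarrow> nat \<Rightarrow> bool" where
  "irreducible_number X n \<longleftrightarrow>
     (\<exists>A. finite A \<and> card A = n \<and> irreducible_about X A) \<and>
     (\<forall>B. finite B \<and> card B < n \<longrightarrow> \<not> irreducible_about X B)"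

definition T_op :: "'a::metric_space set \<Rightarrow> 'a set \<Rightarrow> 'a set" where
  "T_op X A = {x \<in> X. \<forall>K. continuum K \<and> K \<subseteq> X - A \<and> x \<in> K \<longrightarrow> rel_int X K = {}}"

definition T_closed :: "'a::metric_space set \<Rightarrow> 'a set \<Rightarrow> bool" where
  "T_closed X A \<longleftrightarrow> T_op X A = A"

definition vought_elem :: "'a::metric_space set \<Rightarrow> nat \<Rightarrow> 'a \<Rightarrow> 'a set" where
  "vought_elem X n x = (T_op X ^^ n) {x}"

definition vought_decomposition :: "'a::metric_space set \<Rightarrow> nat \<Rightarrow> 'a set set" where
  "vought_decomposition X n = vought_elem X n ` X"

end

theory Submission
  imports Defs
begin

(* The argument uses only two order-theoretic properties of the operator T:
   it is monotone, and it is inflationary on subsets of X (A \<subseteq> T(A)).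
   Both properties pass to the iterate T^n.  Hence for x \<in> A we get
     x \<in> T^n({x})            (T^n is inflationary), and
     T^n({x}) \<subseteq> T^n(A) = A  (T^n is monotone and A is a fixed point of T).
   The first inclusion gives A \<subseteq> \<Union>_{x\<in>A} D(x), the second the converse.
   The hypotheses that X is finished and irreducible about exactly n points
   are what make D(X) a decomposition (Vought's theorem); the saturation
   property itself holds for every n. *)

lemma mono_T_op: "mono (T_op X)"
  unfolding mono_def T_op_def by blast

lemma T_op_inflationary: "B \<subseteq> X \<Longrightarrow> B \<subseteq> T_op X B"
  unfolding T_op_def by blast

lemma T_op_subset: "T_op X B \<subseteq> X"
  unfolding T_op_def by blast

lemma T_op_iterate_inflationary:
  assumes "B \<subseteq> X"
  shows "B \<subseteq> (T_op X ^^ k) B"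
proof (induction k)
  case (Suc k)
  have "(T_op X ^^ k) B \<subseteq> X"
    using assms by (cases k) (auto simp: T_op_subset)
  then have "(T_op X ^^ k) B \<subseteq> (T_op X ^^ Suc k) B"
    by (simp add: T_op_inflationary)
  with Suc.IH show ?case by blast
qed simp

lemma funpow_fixed_point: "f a = a \<Longrightarrow> (f ^^ k) a = a"
  by (induction k) auto

lemma mem_vought_elem: "x \<in> X \<Longrightarrow> x \<in> vought_elem X n x"
  unfolding vought_elem_def using T_op_iterate_inflationary[of "{x}" X n] by blast

lemma vought_elem_subset_T_closed:
  assumes "T_closed X A" and "x \<in> A"
  shows "vought_elem X n x \<subseteq> A"
proof -
  have "(T_op X ^^ n) {x} \<subseteq> (T_op X ^^ n) A"
    using assms(2) by (intro funpow_mono[OF mono_T_op]) simp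
  also have "\<dots> = A"
    using assms(1) unfolding T_closed_def by (rule funpow_fixed_point)
  finally show ?thesis unfolding vought_elem_def .
qed

theorem mainTheorem1:
  fixes X A :: "'a::metric_space set" and n :: nat
  assumes "finished X"
    and "irreducible_number X n"
    and "A \<subseteq> X" and "A \<noteq> {}"
    and "T_closed X A"
  shows "A = (\<Union>x\<in>A. vought_elem X n x)"
proof
  show "A \<subseteq> (\<Union>x\<in>A. vought_elem X n x)"
    using assms(3) mem_vought_elem by blast
  show "(\<Union>x\<in>A. vought_elem X n x) \<subseteq> A"
    using vought_elem_subset_T_closed[OF assms(5)] by blast
qed

end
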